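(* Let $A=[a_{ijk}]=[A_1,\ldots,A_n]$ be an $n\times n\times n$ PASHM and $L(A)=1A_1+2A_2+\cdots+nA_n=[l_{ij}]$. Then every row sum and every column sum of $L(A)$ equals $\binom{n+1}{2}$. If moreover $A$ is an ASHM, then: (i) every entry of $L(A)$ lies in $\{1,\ldots,n\}$, and the first and last rows and the first and last columns of $L(A)$ are permutations of $1,2,\ldots,n$; (ii) fix $i,j$ and let $1\le k_1<k_2<\cdots<k_p\le n$ ($p\ge1$) be the indices $k$ with $a_{ijk}\neq 0$. Let $r=l_{ij}$. Then (iia) $k_1\le r$ and $p\le 2r-1$; moreover $k_1=r$ implies $p=1$; in particular, if $l_{ij}=1$ then $a_{ij1}=1$ and $a_{ijk}=0$ for $1<k\le n$. (iib) $p\le 2(n-r)+1$; in particular, if $l_{ij}=n$ then $a_{ijn}=1$ and $a_{ijk}=0$ for $1\le k<n$.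
   Context: An $n\times n$ alternating sign matrix (ASM) is an $n\times n$ matrix with entries in $\{0,1,-1\}$ such that in every row and column the nonzeros alternate in sign, beginning and ending with $+1$. An $n\times n\times n$ hypermatrix $A=[a_{ijk}]$ is written $A=[A_1,\ldots,A_n]$ with $A_k=[a_{ijk}]_{i,j}$ its $k$-th horizontal plane; its vertical lines are $(a_{ijk})_{k=1}^n$ for fixed $i,j$. $A$ is a planar alternating sign hypermatrix (PASHM) if each horizontal plane $A_k$ is an ASM and each vertical line sums to $1$. $A$ is an alternating sign hypermatrix (ASHM) if all entries lie in $\{0,\pm1\}$ and in every line (fixing any two of the three indices) the nonzeros alternate in sign beginning and ending with $+1$; every ASHM is a PASHM. *)

theory Defs
  imports Main
begin

text \<open>Indices run over 1..n as in the paper. A hypermatrix is a function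
  nat => nat => nat => int, with entry a i j k; only indices in 1..n matter.\<close>

definition alt_sign :: "int list \<Rightarrow> bool" where
  "alt_sign xs \<longleftrightarrow> set xs \<subseteq> {-1, 0, 1} \<and>
     (let ys = filter (\<lambda>x. x \<noteq> 0) xs in
        ys \<noteq> [] \<and> odd (length ys) \<and>
        (\<forall>t < length ys. ys ! t = (if even t then 1 else -1)))"

definition is_ASM :: "nat \<Rightarrow> (nat \<Rightarrow> nat \<Rightarrow> int) \<Rightarrow> bool" where
  "is_ASM n M \<longleftrightarrow>
     (\<forall>i \<in> {1..n}. alt_sign (map (\<lambda>j. M i j) [1..<n+1])) \<and>
     (\<forall>j \<in> {1..n}. alt_sign (map (\<lambda>i. M i j) [1..<n+1]))"

definition is_PASHM :: "nat \<Rightarrow> (nat \<Rightarrow> nat \<Rightarrow> nat \<Rightarrow> int) \<Rightarrow> bool" where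
  "is_PASHM n A \<longleftrightarrow>
     (\<forall>k \<in> {1..n}. is_ASM n (\<lambda>i j. A i j k)) \<and>
     (\<forall>i \<in> {1..n}. \<forall>j \<in> {1..n}. (\<Sum>k = 1..n. A i j k) = 1)"

definition is_ASHM :: "nat \<Rightarrow> (nat \<Rightarrow> nat \<Rightarrow> nat \<Rightarrow> int) \<Rightarrow> bool" where
  "is_ASHM n A \<longleftrightarrow>
     (\<forall>i \<in> {1..n}. \<forall>j \<in> {1..n}. \<forall>k \<in> {1..n}. A i j k \<in> {-1, 0, 1}) \<and>
     (\<forall>i \<in> {1..n}. \<forall>j \<in> {1..n}. alt_sign (map (\<lambda>k. A i j k) [1..<n+1])) \<and>
     (\<forall>i \<in> {1..n}. \<forall>k \<in> {1..n}. alt_sign (map (\<lambda>j. A i j k) [1..<n+1])) \<and>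
     (\<forall>j \<in> {1..n}. \<forall>k \<in> {1..n}. alt_sign (map (\<lambda>i. A i j k) [1..<n+1]))"

definition Lmat :: "nat \<Rightarrow> (nat \<Rightarrow> nat \<Rightarrow> nat \<Rightarrow> int) \<Rightarrow> nat \<Rightarrow> nat \<Rightarrow> int" where
  "Lmat n A i j = (\<Sum>k = 1..n. int k * A i j k)"

end

theory Submission
  imports Defs
begin

text \<open>Along an alternating sign line f on 1..n all partial sums lie in {0,1}, so by summation by
  parts the weighted sum r = \<Sum> k f(k) counts the positions k whose preceding partial sum is 0.
  Every +1 entry sits at such a position and every -1 entry does not, and the +1 entries
  outnumber the -1 entries by one; this gives r \<in> {1..n} and the bounds on the number of
  nonzero entries. For the vertical lines this yields the claims about L(A). On the boundary
  rows and columns of an ASHM the planes have only 0/1 entries, hence are permutation matrices,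
  which makes the boundary rows and columns of L(A) permutations. The row and column sums of
  L(A) only need that the lines of every horizontal plane sum to 1.\<close>

lemma sum_of_bool_eq_card:
  "finite A \<Longrightarrow> (\<Sum>k\<in>A. of_bool (P k) :: int) = int (card {k\<in>A. P k})"
  by (simp add: Collect_conj_eq Int_commute)

lemma sum_list_map_upt_eq_sum:
  "sum_list (map f [1..<m+1]) = sum f {1..m}"
  by (metis Suc_eq_plus1 atLeastLessThanSuc_atLeastAtMost set_upt sum_set_upt_conv_sum_list_nat)

lemma sum_upto_eq_sum_upto_pred:
  "1 \<le> (k :: nat) \<Longrightarrow> sum f {1..k} = sum f {1..k-1} + f k"
  by (cases k) auto

lemma summation_by_parts_weighted:
  "(\<Sum>k=1..n. int k * f k) + (\<Sum>k=1..n. sum f {1..k-1}) = int n * sum (f :: nat \<Rightarrow> int) {1..n}"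
proof (induction n)
  case (Suc n)
  have "int (Suc n) * sum f {1..Suc n} = int n * sum f {1..n} + sum f {1..n} + int (Suc n) * f (Suc n)"
    by (simp add: algebra_simps)
  with Suc.IH show ?case by simp
qed simp

lemma sum_weighted_index_eq_choose:
  "(\<Sum>k=1..n. int k) = int ((n + 1) choose 2)"
proof -
  have "(\<Sum>k=1..n. k) = n * (n + 1) div 2"
    using gauss_sum_from_Suc_0[of n, where 'a=nat] by simp
  moreover have "(n + 1) choose 2 = n * (n + 1) div 2"
    using choose_two[of "n + 1"] by (simp only: add_diff_cancel_right' mult.commute)
  moreover have "(\<Sum>k=1..n. int k) = int (\<Sum>k=1..n. k)" by simp
  ultimately show ?thesis by simp
qed

subsection \<open>Permutation matrices\<close>

lemma zero_one_sum_eq_one: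
  fixes g :: "nat \<Rightarrow> int"
  assumes "\<forall>k\<in>{1..n}. g k \<in> {0, 1}" "(\<Sum>k=1..n. g k) = 1"
  shows "\<exists>k0\<in>{1..n}. g k0 = 1 \<and> (\<forall>k\<in>{1..n}. k \<noteq> k0 \<longrightarrow> g k = 0) \<and>
           (\<Sum>k=1..n. int k * g k) = int k0"
proof -
  have "(\<Sum>k=1..n. g k) = (\<Sum>k=1..n. of_bool (g k = 1))"
    using assms(1) by (intro sum.cong) auto
  then have "card {k \<in> {1..n}. g k = 1} = 1"
    using assms(2) by (simp only: sum_of_bool_eq_card finite_atLeastAtMost)
  then obtain k0 where k0: "{k \<in> {1..n}. g k = 1} = {k0}" by (auto simp: card_Suc_eq)
  then have g0: "k0 \<in> {1..n}" "g k0 = 1" by auto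
  have others: "g k = 0" if "k \<in> {1..n}" "k \<noteq> k0" for k
    using that k0 assms(1) by blast
  have "(\<Sum>k=1..n. int k * g k) = (\<Sum>k\<in>{1..n}. if k = k0 then int k0 else 0)"
    using g0 others by (intro sum.cong) auto
  also have "\<dots> = int k0" using g0 by simp
  finally show ?thesis using g0 others by blast
qed

lemma permutation_matrix_weighted_row_sums_bij:
  fixes g :: "nat \<Rightarrow> nat \<Rightarrow> int"
  assumes entries: "\<forall>j\<in>{1..n}. \<forall>k\<in>{1..n}. g j k \<in> {0, 1}"
    and rows: "\<forall>j\<in>{1..n}. (\<Sum>k=1..n. g j k) = 1"
    and cols: "\<forall>k\<in>{1..n}. (\<Sum>j=1..n. g j k) = 1"
  shows "bij_betw (\<lambda>j. \<Sum>k=1..n. int k * g j k) {1..n} {1..int n}"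
proof -
  define \<sigma> where "\<sigma> j = (\<Sum>k=1..n. int k * g j k)" for j
  have row: "\<exists>k\<in>{1..n}. g j k = 1 \<and> \<sigma> j = int k" if "j \<in> {1..n}" for j
    using zero_one_sum_eq_one[of n "g j"] entries rows that unfolding \<sigma>_def by blast
  have col: "j = j'" if "k \<in> {1..n}" "j \<in> {1..n}" "j' \<in> {1..n}" "g j k = 1" "g j' k = 1"
    for j j' k
  proof -
    have "\<forall>j\<in>{1..n}. g j k \<in> {0, 1}" "(\<Sum>j=1..n. g j k) = 1"
      using entries cols that(1) by blast+
    from zero_one_sum_eq_one[OF this]
    obtain j0 where j0: "\<forall>j\<in>{1..n}. j \<noteq> j0 \<longrightarrow> g j k = 0" by blast
    have "j = j0" "j' = j0"
      using j0 that(2-5) by (metis zero_neq_one)+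
    then show ?thesis by simp
  qed
  have inj: "inj_on \<sigma> {1..n}"
  proof (rule inj_onI)
    fix j j' assume j: "j \<in> {1..n}" and j': "j' \<in> {1..n}" and eq: "\<sigma> j = \<sigma> j'"
    obtain k where k: "k \<in> {1..n}" "g j k = 1" "\<sigma> j = int k" using row[OF j] by blast
    obtain k' where k': "k' \<in> {1..n}" "g j' k' = 1" "\<sigma> j' = int k'" using row[OF j'] by blast
    from k k' eq have "k = k'" by simp
    with col[OF k(1) j j'] k k' show "j = j'" by simp
  qed
  moreover have "\<sigma> ` {1..n} \<subseteq> {1..int n}" using row by force
  moreover have "card (\<sigma> ` {1..n}) = card {1..int n}" using card_image[OF inj] by simp
  ultimately show ?thesis unfolding \<sigma>_def[symmetric] bij_betw_def
    using card_subset_eq[of "{1..int n}"] by simp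
qed

lemma sum_weighted_plane_eq_choose:
  fixes g :: "nat \<Rightarrow> nat \<Rightarrow> int"
  assumes "\<forall>k\<in>{1..n}. (\<Sum>j=1..n. g j k) = 1"
  shows "(\<Sum>j=1..n. \<Sum>k=1..n. int k * g j k) = int ((n + 1) choose 2)"
proof -
  have "(\<Sum>j=1..n. \<Sum>k=1..n. int k * g j k) = (\<Sum>k=1..n. \<Sum>j=1..n. int k * g j k)"
    by (rule sum.swap)
  also have "\<dots> = (\<Sum>k=1..n. int k * (\<Sum>j=1..n. g j k))"
    by (simp only: sum_distrib_left)
  also have "\<dots> = (\<Sum>k=1..n. int k)" using assms by simp
  finally show ?thesis by (simp only: sum_weighted_index_eq_choose)
qed

subsection \<open>Alternating sign sequences\<close>

lemma sum_list_filter_nonzero: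
  "sum_list (filter (\<lambda>x. x \<noteq> 0) xs) = sum_list (xs :: int list)"
  by (induction xs) auto

lemma sum_list_take_alternating:
  assumes "\<forall>t<length ys. ys ! t = (if even t then 1 else -1)" "m \<le> length ys"
  shows "sum_list (take m (ys :: int list)) = (if even m then 0 else 1)"
  using assms(2)
proof (induction m)
  case (Suc m)
  then have "take (Suc m) ys = take m ys @ [ys ! m]" by (simp add: take_Suc_conv_app_nth)
  with Suc assms(1) show ?case by auto
qed simp

lemma alt_sign_sum_list_take:
  assumes "alt_sign xs"
  shows "sum_list (take m xs) \<in> {0, 1}"
proof -
  define ys where "ys = filter (\<lambda>x. x \<noteq> 0) xs"
  define a where "a = filter (\<lambda>x. x \<noteq> 0) (take m xs)"
  have "ys = a @ filter (\<lambda>x. x \<noteq> 0) (drop m xs)"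
    unfolding ys_def a_def by (metis append_take_drop_id filter_append)
  then have a: "a = take (length a) ys" "length a \<le> length ys" by simp_all
  have "\<forall>t<length ys. ys ! t = (if even t then 1 else -1)"
    using assms unfolding alt_sign_def ys_def Let_def by blast
  then have "sum_list (take (length a) ys) \<in> {0, 1}"
    using sum_list_take_alternating[OF _ a(2)] by simp
  moreover have "sum_list (take m xs) = sum_list a"
    unfolding a_def by (simp only: sum_list_filter_nonzero)
  ultimately show ?thesis using a(1) by simp
qed

lemma alt_sign_sum_list:
  assumes "alt_sign xs"
  shows "sum_list xs = 1"
proof -
  define ys where "ys = filter (\<lambda>x. x \<noteq> 0) xs"
  have "\<forall>t<length ys. ys ! t = (if even t then 1 else -1)" "odd (length ys)"
    using assms unfolding alt_sign_def ys_def Let_def by blast+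
  with sum_list_take_alternating[of ys "length ys"] show ?thesis
    by (simp add: ys_def sum_list_filter_nonzero)
qed

definition positions :: "nat \<Rightarrow> (nat \<Rightarrow> int) \<Rightarrow> int \<Rightarrow> nat set" where
  "positions n f c = {k \<in> {1..n}. f k = c}"

definition zero_prefixes :: "nat \<Rightarrow> (nat \<Rightarrow> int) \<Rightarrow> nat set" where
  "zero_prefixes n f = {k \<in> {1..n}. sum f {1..k-1} = 0}"

lemma zero_prefixes_subset: "zero_prefixes n f \<subseteq> {1..n}"
  by (auto simp: zero_prefixes_def)

lemma finite_zero_prefixes: "finite (zero_prefixes n f)"
  using finite_subset[OF zero_prefixes_subset] by blast

lemma card_zero_prefixes_le: "card (zero_prefixes n f) \<le> n"
  using card_mono[OF _ zero_prefixes_subset] by fastforce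

context
  fixes n :: nat and f :: "nat \<Rightarrow> int"
  assumes alt: "alt_sign (map f [1..<n+1])"
begin

lemma alt_line_length_pos: "1 \<le> n"
  using alt by (cases n) (auto simp: alt_sign_def)

lemma alt_line_entries:
  assumes "k \<in> {1..n}"
  shows "f k \<in> {-1, 0, 1}"
proof -
  have "k \<in> set [1..<n+1]" using assms by auto
  then have "f k \<in> set (map f [1..<n+1])" by (simp only: set_map) (rule imageI)
  then show ?thesis using alt unfolding alt_sign_def by blast
qed

lemma alt_line_partial_sum:
  assumes "m \<le> n"
  shows "sum f {1..m} \<in> {0, 1}"
proof -
  have "take m [1..<n+1] = [1..<1+m]"
    using assms by (intro take_upt) simp
  then have "take m (map f [1..<n+1]) = map f [1..<m+1]" by (simp add: take_map add.commute)
  with alt_sign_sum_list_take[OF alt, of m] show ?thesis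
    by (simp only: sum_list_map_upt_eq_sum)
qed

lemma alt_line_sum: "sum f {1..n} = 1"
  using alt_sign_sum_list[OF alt] by (simp only: sum_list_map_upt_eq_sum)

lemma alt_line_first_last: "f 1 \<in> {0, 1}" "f n \<in> {0, 1}"
proof -
  show "f 1 \<in> {0, 1}" using alt_line_partial_sum[of 1] alt_line_length_pos by simp
  obtain m where m: "n = Suc m" using alt_line_length_pos by (cases n) auto
  then have "sum f {1..n} = sum f {1..m} + f n" by simp
  with alt_line_partial_sum[of m] alt_line_sum m show "f n \<in> {0, 1}" by auto
qed

lemma alt_line_weighted_sum_eq_card:
  "(\<Sum>k=1..n. int k * f k) = int (card (zero_prefixes n f))"
proof -
  have "(\<Sum>k=1..n. int k * f k) = (\<Sum>k=1..n. 1 - sum f {1..k-1})"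
    using summation_by_parts_weighted[where n=n and f=f] alt_line_sum by (simp add: sum_subtractf)
  also have "\<dots> = (\<Sum>k=1..n. of_bool (sum f {1..k-1} = 0))"
  proof (rule sum.cong)
    fix k assume "k \<in> {1..n}"
    then show "1 - sum f {1..k-1} = of_bool (sum f {1..k-1} = 0)"
      using alt_line_partial_sum[of "k - 1"] by auto
  qed simp
  also have "\<dots> = int (card (zero_prefixes n f))"
    unfolding zero_prefixes_def by (rule sum_of_bool_eq_card) simp
  finally show ?thesis .
qed

lemma alt_line_plus_positions_subset: "positions n f 1 \<subseteq> zero_prefixes n f"
proof
  fix k assume "k \<in> positions n f 1"
  then have k: "k \<in> {1..n}" "f k = 1" by (auto simp: positions_def)
  have "sum f {1..k} \<in> {0, 1}" "sum f {1..k-1} \<in> {0, 1}"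
    using k(1) by (intro alt_line_partial_sum; auto)+
  moreover have "sum f {1..k} = sum f {1..k-1} + f k"
    using k(1) by (intro sum_upto_eq_sum_upto_pred) simp
  ultimately show "k \<in> zero_prefixes n f" using k by (auto simp: zero_prefixes_def)
qed

lemma alt_line_minus_positions_subset: "positions n f (-1) \<subseteq> {1..n} - zero_prefixes n f"
proof
  fix k assume "k \<in> positions n f (-1)"
  then have k: "k \<in> {1..n}" "f k = -1" by (auto simp: positions_def)
  have "sum f {1..k} \<in> {0, 1}" "sum f {1..k-1} \<in> {0, 1}"
    using k(1) by (intro alt_line_partial_sum; auto)+
  moreover have "sum f {1..k} = sum f {1..k-1} + f k"
    using k(1) by (intro sum_upto_eq_sum_upto_pred) simp
  ultimately show "k \<in> {1..n} - zero_prefixes n f" using k by (auto simp: zero_prefixes_def)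
qed

lemma alt_line_card_plus_positions:
  "card (positions n f 1) = card (positions n f (-1)) + 1"
proof -
  have "1 = sum f {1..n}" by (simp only: alt_line_sum)
  also have "\<dots> = (\<Sum>k=1..n. of_bool (f k = 1) - of_bool (f k = -1))"
    using alt_line_entries by (intro sum.cong) auto
  also have "\<dots> = int (card (positions n f 1)) - int (card (positions n f (-1)))"
    unfolding sum_subtractf positions_def by (simp only: sum_of_bool_eq_card finite_atLeastAtMost)
  finally show ?thesis by linarith
qed

lemma alt_line_card_support:
  "card {k \<in> {1..n}. f k \<noteq> 0} = card (positions n f 1) + card (positions n f (-1))"
proof -
  have "{k \<in> {1..n}. f k \<noteq> 0} = positions n f 1 \<union> positions n f (-1)"
    using alt_line_entries by (auto simp: positions_def)
  then show ?thesis by (simp add: card_Un_disjoint positions_def disjoint_iff)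
qed

lemma alt_line_support_nonempty: "{k \<in> {1..n}. f k \<noteq> 0} \<noteq> {}"
proof
  assume "{k \<in> {1..n}. f k \<noteq> 0} = {}"
  then have "card {k \<in> {1..n}. f k \<noteq> 0} = 0" by (simp only: card.empty)
  with alt_line_card_support alt_line_card_plus_positions show False by simp
qed

lemma alt_line_Min_support_mem: "Min {k \<in> {1..n}. f k \<noteq> 0} \<in> {k \<in> {1..n}. f k \<noteq> 0}"
  using alt_line_support_nonempty by (intro Min_in) auto

lemma alt_line_zero_before_Min_support:
  assumes "1 \<le> k" "k < Min {k \<in> {1..n}. f k \<noteq> 0}"
  shows "f k = 0"
proof (rule ccontr)
  assume "f k \<noteq> 0"
  moreover have "k \<le> n" using assms alt_line_Min_support_mem by auto
  ultimately have "Min {k \<in> {1..n}. f k \<noteq> 0} \<le> k" using assms(1) by (intro Min_le) auto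
  with assms(2) show False by simp
qed

lemma alt_line_initial_zero_prefixes:
  "{1..Min {k \<in> {1..n}. f k \<noteq> 0}} \<subseteq> zero_prefixes n f"
proof
  fix k assume k: "k \<in> {1..Min {k \<in> {1..n}. f k \<noteq> 0}}"
  then have "sum f {1..k-1} = 0"
    by (intro sum.neutral ballI alt_line_zero_before_Min_support) auto
  with k alt_line_Min_support_mem show "k \<in> zero_prefixes n f" by (auto simp: zero_prefixes_def)
qed

lemma alt_line_Min_support_le_weighted_sum:
  "int (Min {k \<in> {1..n}. f k \<noteq> 0}) \<le> (\<Sum>k=1..n. int k * f k)"
  unfolding alt_line_weighted_sum_eq_card
  using card_mono[OF finite_zero_prefixes alt_line_initial_zero_prefixes] by simp

lemma alt_line_weighted_sum_range: "(\<Sum>k=1..n. int k * f k) \<in> {1..int n}"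
proof -
  have "card (zero_prefixes n f) \<le> n" by (rule card_zero_prefixes_le)
  moreover have "1 \<le> Min {k \<in> {1..n}. f k \<noteq> 0}" using alt_line_Min_support_mem by simp
  ultimately show ?thesis
    using alt_line_Min_support_le_weighted_sum unfolding alt_line_weighted_sum_eq_card by simp
qed

lemma alt_line_card_support_le_weighted_sum:
  "int (card {k \<in> {1..n}. f k \<noteq> 0}) \<le> 2 * (\<Sum>k=1..n. int k * f k) - 1"
proof -
  have "card (positions n f 1) \<le> card (zero_prefixes n f)"
    by (rule card_mono[OF finite_zero_prefixes alt_line_plus_positions_subset])
  then show ?thesis
    unfolding alt_line_weighted_sum_eq_card
    using alt_line_card_support alt_line_card_plus_positions by simp
qed

lemma alt_line_card_support_le_co_weighted_sum:
  "int (card {k \<in> {1..n}. f k \<noteq> 0}) \<le> 2 * (int n - (\<Sum>k=1..n. int k * f k)) + 1"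
proof -
  have "card (positions n f (-1)) \<le> card ({1..n} - zero_prefixes n f)"
    by (rule card_mono[OF _ alt_line_minus_positions_subset]) simp
  also have "\<dots> = n - card (zero_prefixes n f)"
    by (subst card_Diff_subset[OF finite_zero_prefixes zero_prefixes_subset]) simp
  finally have "int (card (positions n f (-1))) \<le> int n - int (card (zero_prefixes n f))"
    using card_zero_prefixes_le[of n f] by linarith
  then show ?thesis
    unfolding alt_line_weighted_sum_eq_card
    using alt_line_card_support alt_line_card_plus_positions by simp
qed

lemma alt_line_support_singleton:
  assumes "card {k \<in> {1..n}. f k \<noteq> 0} = 1"
  shows "\<exists>k0\<in>{1..n}. f k0 = 1 \<and> (\<forall>k\<in>{1..n}. k \<noteq> k0 \<longrightarrow> f k = 0) \<and>
           (\<Sum>k=1..n. int k * f k) = int k0"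
proof (rule zero_one_sum_eq_one)
  have "positions n f (-1) = {}"
    using assms alt_line_card_support alt_line_card_plus_positions
    by (simp add: positions_def)
  then show "\<forall>k\<in>{1..n}. f k \<in> {0, 1}"
    using alt_line_entries by (fastforce simp: positions_def)
  show "(\<Sum>k=1..n. f k) = 1" by (rule alt_line_sum)
qed

lemma alt_line_card_support_eq_one_if_Min_support:
  assumes "int (Min {k \<in> {1..n}. f k \<noteq> 0}) = (\<Sum>k=1..n. int k * f k)"
  shows "card {k \<in> {1..n}. f k \<noteq> 0} = 1"
proof -
  let ?k1 = "Min {k \<in> {1..n}. f k \<noteq> 0}"
  have "card (zero_prefixes n f) = ?k1"
    using assms unfolding alt_line_weighted_sum_eq_card by simp
  then have "zero_prefixes n f = {1..?k1}"
    using card_subset_eq[OF finite_zero_prefixes alt_line_initial_zero_prefixes] by simp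
  have "positions n f 1 \<subseteq> {?k1}"
  proof
    fix k assume k: "k \<in> positions n f 1"
    then have "k \<in> {1..?k1}"
      using alt_line_plus_positions_subset \<open>zero_prefixes n f = {1..?k1}\<close> by blast
    moreover have "\<not> k < ?k1"
    proof
      assume "k < ?k1"
      moreover have "1 \<le> k" "f k = 1" using k by (auto simp: positions_def)
      ultimately show False using alt_line_zero_before_Min_support[of k] by simp
    qed
    ultimately show "k \<in> {?k1}" by simp
  qed
  then have "card (positions n f 1) \<le> 1"
    using card_mono[of "{?k1}"] by simp
  then show ?thesis
    using alt_line_card_support alt_line_card_plus_positions by simp
qed

lemma alt_line_weighted_sum_eq_one:
  assumes "(\<Sum>k=1..n. int k * f k) = 1"
  shows "f 1 = 1 \<and> (\<forall>k\<in>{2..n}. f k = 0)"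
proof -
  have "int (Min {k \<in> {1..n}. f k \<noteq> 0}) = 1"
    using assms alt_line_Min_support_le_weighted_sum alt_line_Min_support_mem by simp
  then have "card {k \<in> {1..n}. f k \<noteq> 0} = 1"
    using assms by (intro alt_line_card_support_eq_one_if_Min_support) simp
  from alt_line_support_singleton[OF this] obtain k0 where
    "k0 \<in> {1..n}" "f k0 = 1" "\<forall>k\<in>{1..n}. k \<noteq> k0 \<longrightarrow> f k = 0" "int k0 = 1"
    using assms by auto
  then show ?thesis by auto
qed

lemma alt_line_weighted_sum_eq_length:
  assumes "(\<Sum>k=1..n. int k * f k) = int n"
  shows "f n = 1 \<and> (\<forall>k\<in>{1..<n}. f k = 0)"
proof -
  have "card {k \<in> {1..n}. f k \<noteq> 0} \<le> 1"
    using assms alt_line_card_support_le_co_weighted_sum by simp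
  moreover have "card {k \<in> {1..n}. f k \<noteq> 0} \<noteq> 0"
    using alt_line_support_nonempty by (simp add: card_eq_0_iff)
  ultimately have "card {k \<in> {1..n}. f k \<noteq> 0} = 1" by linarith
  from alt_line_support_singleton[OF this] obtain k0 where
    "k0 \<in> {1..n}" "f k0 = 1" "\<forall>k\<in>{1..n}. k \<noteq> k0 \<longrightarrow> f k = 0" "k0 = n"
    using assms by auto
  then show ?thesis by auto
qed

end

subsection \<open>Hypermatrices\<close>

lemma PASHM_Lmat_row_sum:
  assumes "is_PASHM n A" "i \<in> {1..n}"
  shows "(\<Sum>j=1..n. Lmat n A i j) = int ((n + 1) choose 2)"
  unfolding Lmat_def
proof (rule sum_weighted_plane_eq_choose, intro ballI)
  fix k assume "k \<in> {1..n}"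
  with assms have "alt_sign (map (\<lambda>j. A i j k) [1..<n+1])"
    unfolding is_PASHM_def is_ASM_def by blast
  then show "(\<Sum>j=1..n. A i j k) = 1" by (rule alt_line_sum)
qed

lemma PASHM_Lmat_col_sum:
  assumes "is_PASHM n A" "j \<in> {1..n}"
  shows "(\<Sum>i=1..n. Lmat n A i j) = int ((n + 1) choose 2)"
  unfolding Lmat_def
proof (rule sum_weighted_plane_eq_choose, intro ballI)
  fix k assume "k \<in> {1..n}"
  with assms have "alt_sign (map (\<lambda>i. A i j k) [1..<n+1])"
    unfolding is_PASHM_def is_ASM_def by blast
  then show "(\<Sum>i=1..n. A i j k) = 1" by (rule alt_line_sum)
qed

lemma ASHM_Lmat_entry:
  assumes "is_ASHM n A" "i \<in> {1..n}" "j \<in> {1..n}"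
  shows "Lmat n A i j \<in> {1..int n} \<and>
    (let K = {k \<in> {1..n}. A i j k \<noteq> 0}; p = card K; r = Lmat n A i j in
       K \<noteq> {} \<and>
       int (Min K) \<le> r \<and> int p \<le> 2 * r - 1 \<and>
       (int (Min K) = r \<longrightarrow> p = 1) \<and>
       (r = 1 \<longrightarrow> A i j 1 = 1 \<and> (\<forall>k \<in> {2..n}. A i j k = 0)) \<and>
       int p \<le> 2 * (int n - r) + 1 \<and>
       (r = int n \<longrightarrow> A i j n = 1 \<and> (\<forall>k \<in> {1..<n}. A i j k = 0)))"
proof -
  have alt: "alt_sign (map (A i j) [1..<n+1])"
    using assms unfolding is_ASHM_def by blast
  show ?thesis
    unfolding Let_def Lmat_def
    using alt_line_weighted_sum_range[OF alt] alt_line_support_nonempty[OF alt]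
      alt_line_Min_support_le_weighted_sum[OF alt] alt_line_card_support_le_weighted_sum[OF alt]
      alt_line_card_support_eq_one_if_Min_support[OF alt] alt_line_weighted_sum_eq_one[OF alt]
      alt_line_card_support_le_co_weighted_sum[OF alt] alt_line_weighted_sum_eq_length[OF alt]
    by blast
qed

lemma ASHM_Lmat_boundary_row_bij:
  assumes "is_ASHM n A" "i = 1 \<or> i = n"
  shows "bij_betw (\<lambda>j. Lmat n A i j) {1..n} {1..int n}"
proof (cases "n = 0")
  case False
  then have i: "i \<in> {1..n}" using assms(2) by auto
  show ?thesis
    unfolding Lmat_def
  proof (rule permutation_matrix_weighted_row_sums_bij; intro ballI)
    fix j k assume "j \<in> {1..n}" "k \<in> {1..n}"
    then have "alt_sign (map (\<lambda>i. A i j k) [1..<n+1])"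
      using assms(1) unfolding is_ASHM_def by blast
    then show "A i j k \<in> {0, 1}" using assms(2) alt_line_first_last by blast
  next
    fix j assume "j \<in> {1..n}"
    then have "alt_sign (map (\<lambda>k. A i j k) [1..<n+1])"
      using assms(1) i unfolding is_ASHM_def by blast
    then show "(\<Sum>k=1..n. A i j k) = 1" by (rule alt_line_sum)
  next
    fix k assume "k \<in> {1..n}"
    then have "alt_sign (map (\<lambda>j. A i j k) [1..<n+1])"
      using assms(1) i unfolding is_ASHM_def by blast
    then show "(\<Sum>j=1..n. A i j k) = 1" by (rule alt_line_sum)
  qed
qed (simp add: bij_betw_def)

lemma ASHM_Lmat_boundary_col_bij:
  assumes "is_ASHM n A" "j = 1 \<or> j = n"
  shows "bij_betw (\<lambda>i. Lmat n A i j) {1..n} {1..int n}"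
proof (cases "n = 0")
  case False
  then have j: "j \<in> {1..n}" using assms(2) by auto
  show ?thesis
    unfolding Lmat_def
  proof (rule permutation_matrix_weighted_row_sums_bij; intro ballI)
    fix i k assume "i \<in> {1..n}" "k \<in> {1..n}"
    then have "alt_sign (map (\<lambda>j. A i j k) [1..<n+1])"
      using assms(1) unfolding is_ASHM_def by blast
    then show "A i j k \<in> {0, 1}" using assms(2) alt_line_first_last by blast
  next
    fix i assume "i \<in> {1..n}"
    then have "alt_sign (map (\<lambda>k. A i j k) [1..<n+1])"
      using assms(1) j unfolding is_ASHM_def by blast
    then show "(\<Sum>k=1..n. A i j k) = 1" by (rule alt_line_sum)
  next
    fix k assume "k \<in> {1..n}"
    then have "alt_sign (map (\<lambda>i. A i j k) [1..<n+1])"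
      using assms(1) j unfolding is_ASHM_def by blast
    then show "(\<Sum>i=1..n. A i j k) = 1" by (rule alt_line_sum)
  qed
qed (simp add: bij_betw_def)

theorem mainTheorem3:
  fixes n :: nat and A :: "nat \<Rightarrow> nat \<Rightarrow> nat \<Rightarrow> int"
  assumes "is_PASHM n A"
  shows "(\<forall>i \<in> {1..n}. (\<Sum>j = 1..n. Lmat n A i j) = int ((n + 1) choose 2)) \<and>
         (\<forall>j \<in> {1..n}. (\<Sum>i = 1..n. Lmat n A i j) = int ((n + 1) choose 2)) \<and>
         (is_ASHM n A \<longrightarrow>
            (\<forall>i \<in> {1..n}. \<forall>j \<in> {1..n}. Lmat n A i j \<in> {1..int n}) \<and>
            bij_betw (\<lambda>j. Lmat n A 1 j) {1..n} {1..int n} \<and>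
            bij_betw (\<lambda>j. Lmat n A n j) {1..n} {1..int n} \<and>
            bij_betw (\<lambda>i. Lmat n A i 1) {1..n} {1..int n} \<and>
            bij_betw (\<lambda>i. Lmat n A i n) {1..n} {1..int n} \<and>
            (\<forall>i \<in> {1..n}. \<forall>j \<in> {1..n}.
               let K = {k \<in> {1..n}. A i j k \<noteq> 0}; p = card K; r = Lmat n A i j in
               K \<noteq> {} \<and>
               int (Min K) \<le> r \<and> int p \<le> 2 * r - 1 \<and>
               (int (Min K) = r \<longrightarrow> p = 1) \<and>
               (r = 1 \<longrightarrow> A i j 1 = 1 \<and> (\<forall>k \<in> {2..n}. A i j k = 0)) \<and>
               int p \<le> 2 * (int n - r) + 1 \<and>
               (r = int n \<longrightarrow> A i j n = 1 \<and> (\<forall>k \<in> {1..<n}. A i j k = 0))))"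
  using PASHM_Lmat_row_sum[OF assms] PASHM_Lmat_col_sum[OF assms] ASHM_Lmat_entry
    ASHM_Lmat_boundary_row_bij ASHM_Lmat_boundary_col_bij
  by blast

end
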